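(* Let $\vec x$ be an optimal solution of the LP $\max\{\vec w\cdot\vec x:\sum_j u_{i,j}x_j\le b_i\ \forall i,\ \vec x\in[0,1]^n\}$ and run the algorithm $\textsc{SKSP}(\alpha_1,\beta_1,\alpha_2)$ described in the context. Then for every item $j$, the event $\mathrm{ad}_{2,j}$ that $j$ is added in the second chance satisfies $\Pr[\mathrm{ad}_{2,j}]\ge\frac{x_j}{k}\alpha_2\left(1-\frac{\alpha_1x_j}{k}-\beta_1-\frac{\alpha_2}{2}\right)$.
   Context: Stochastic $k$-set packing: $n$ items; item $j$ has random weight $W_j\ge0$ and random size vector $S_j\in\{0,1\}^m$, the pairs $(W_j,S_j)$ mutually independent across $j$; $u_{i,j}=\mathbb E[S_{i,j}]$, $w_j=\mathbb E[W_j]$; $S_{i,j}=0$ a.s. outside a known set $\mathcal C(j)$ with $|\mathcal C(j)|\le k$; capacities $\vec b\in\mathbb Z_+^m$. An item $j$ is safe if every $i\in\mathcal C(j)$ has at least one unit of remaining capacity; a probed item is irrevocably added and its realization observed. Algorithm $\textsc{SKSP}(\alpha_1,\beta_1,\alpha_2)$ with $\alpha_1,\alpha_2\ge0$ and $0\le\beta_1\le\alpha_1(1-\alpha_1/2)$: First chance: generate independent Bernoulli $Y_{1,j}$ with mean $\alpha_1x_j/k$, follow a uniformly random order over $[n]$ and add $j$ iff $Y_{1,j}=1$ and $j$ is safe, where (by simulation-based attenuation, i.e. adding with a suitable extra probability) each item is added in this first chance with probability exactly $\beta_1x_j/k$. Second chance: generate independent Bernoulli $Y_{2,j}$ with mean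 $\alpha_2x_j/k$, follow an independent uniformly random order over $[n]$ and add $j$ iff $j$ is safe, $Y_{1,j}=0$ and $Y_{2,j}=1$. *)

theory Defs
  imports "HOL-Probability.Probability" "HOL-Combinatorics.Multiset_Permutations"
begin

text \<open>Items are 0..<n, resources are 0..<m. The random size vector S_j of item j is
  represented by the random set of resources i with S_{i,j} = 1; its law is the pmf D j.\<close>

definition mean_size :: "(nat \<Rightarrow> nat set pmf) \<Rightarrow> nat \<Rightarrow> nat \<Rightarrow> real" where
  "mean_size D i j = measure_pmf.prob (D j) {A. i \<in> A}"

definition lp_feasible ::
  "nat \<Rightarrow> nat \<Rightarrow> (nat \<Rightarrow> nat set pmf) \<Rightarrow> (nat \<Rightarrow> nat) \<Rightarrow> (nat \<Rightarrow> real) \<Rightarrow> bool" where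
  "lp_feasible n m D b y \<longleftrightarrow>
     (\<forall>j<n. 0 \<le> y j \<and> y j \<le> 1) \<and>
     (\<forall>i<m. (\<Sum>j<n. mean_size D i j * y j) \<le> real (b i))"

definition lp_optimal ::
  "nat \<Rightarrow> nat \<Rightarrow> (nat \<Rightarrow> nat set pmf) \<Rightarrow> (nat \<Rightarrow> nat) \<Rightarrow> (nat \<Rightarrow> real) \<Rightarrow> (nat \<Rightarrow> real) \<Rightarrow> bool" where
  "lp_optimal n m D b w x \<longleftrightarrow> lp_feasible n m D b x \<and>
     (\<forall>y. lp_feasible n m D b y \<longrightarrow> (\<Sum>j<n. w j * y j) \<le> (\<Sum>j<n. w j * x j))"

text \<open>used i = number of units of resource i consumed so far; j is safe iff every
  resource in C j still has at least one unit of remaining capacity.\<close>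
definition safe :: "(nat \<Rightarrow> nat set) \<Rightarrow> (nat \<Rightarrow> nat) \<Rightarrow> (nat \<Rightarrow> nat) \<Rightarrow> nat \<Rightarrow> bool" where
  "safe C b used j \<longleftrightarrow> (\<forall>i\<in>C j. used i < b i)"

text \<open>The state is (resource usage, set of items added in this pass).\<close>
fun pass :: "(nat \<Rightarrow> bool) \<Rightarrow> (nat \<Rightarrow> nat set) \<Rightarrow> (nat \<Rightarrow> nat) \<Rightarrow> (nat \<Rightarrow> nat set)
    \<Rightarrow> nat list \<Rightarrow> (nat \<Rightarrow> nat) \<times> nat set \<Rightarrow> (nat \<Rightarrow> nat) \<times> nat set" where
  "pass want C b S [] st = st"
| "pass want C b S (j # js) (used, A) =
     (if want j \<and> safe C b used j
      then pass want C b S js (\<lambda>i. used i + (if i \<in> S j then 1 else 0), insert j A)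
      else pass want C b S js (used, A))"

text \<open>The attenuation is realised by
  independent coins Z j with mean gam j: in the first chance j is added iff
  Y1 j, Z j and j is safe. The result is the pair (items added in the first chance,
  items added in the second chance).\<close>
definition sksp :: "nat \<Rightarrow> nat \<Rightarrow> (nat \<Rightarrow> nat set) \<Rightarrow> (nat \<Rightarrow> nat) \<Rightarrow> (nat \<Rightarrow> nat set pmf)
    \<Rightarrow> (nat \<Rightarrow> real) \<Rightarrow> real \<Rightarrow> real \<Rightarrow> (nat \<Rightarrow> real) \<Rightarrow> (nat set \<times> nat set) pmf" where
  "sksp n k C b D x \<alpha>1 \<alpha>2 gam = do {
     S \<leftarrow> Pi_pmf {..<n} {} D;
     Y1 \<leftarrow> Pi_pmf {..<n} False (\<lambda>j. bernoulli_pmf (\<alpha>1 * x j / real k));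
     Z \<leftarrow> Pi_pmf {..<n} False (\<lambda>j. bernoulli_pmf (gam j));
     \<sigma>1 \<leftarrow> pmf_of_set (permutations_of_set {..<n});
     Y2 \<leftarrow> Pi_pmf {..<n} False (\<lambda>j. bernoulli_pmf (\<alpha>2 * x j / real k));
     \<sigma>2 \<leftarrow> pmf_of_set (permutations_of_set {..<n});
     let st1 = pass (\<lambda>j. Y1 j \<and> Z j) C b S \<sigma>1 (\<lambda>_. 0, {});
     let st2 = pass (\<lambda>j. \<not> Y1 j \<and> Y2 j) C b S \<sigma>2 (fst st1, {});
     return_pmf (snd st1, snd st2)
   }"

end

theory Submission
  imports Defs "HOL-Combinatorics.Transposition"
begin

text \<open>Item \<open>j\<close> is added in the second chance whenever \<open>Y2 j\<close> holds and \<open>j\<close> is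
  \<^emph>\<open>reached safe\<close>: \<open>Y1 j\<close> fails and every resource in \<open>C j\<close> still has spare capacity
  when the second pass reaches \<open>j\<close>. That event ignores \<open>Y2 j\<close>, so it suffices to show that it
  fails with probability at most \<open>\<alpha>1 x j / k + \<beta>1 + \<alpha>2 / 2\<close>. Besides \<open>Y1 j\<close>, it fails only if
  some \<open>i \<in> C j\<close> is exhausted. The load of \<open>i\<close> at that moment is at most the number of items
  \<open>y\<close> using \<open>i\<close> that were added in the first chance, or that have \<open>Y2 y\<close> and precede \<open>j\<close> in
  the second order. Whether \<open>y\<close> is added does not depend on its own size, and \<open>y\<close> precedes \<open>j\<close>
  with probability at most 1/2, so this count has expectation at most
  \<open>(\<Sum>y. mean_size D i y * x y) * (\<beta>1 + \<alpha>2 / 2) / k \<le> b i * (\<beta>1 + \<alpha>2 / 2) / k\<close>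
  by the LP constraint.
  Markov's inequality and a union bound over the at most \<open>k\<close> resources of \<open>C j\<close> conclude.\<close>

section \<open>Events of product distributions\<close>

lemma measure_pmf_prob_cong_support:
  assumes "\<And>\<omega>. \<omega> \<in> set_pmf p \<Longrightarrow> \<omega> \<in> A \<longleftrightarrow> \<omega> \<in> B"
  shows "measure_pmf.prob p A = measure_pmf.prob p B"
  using assms by (intro measure_prob_cong_0) (auto simp: set_pmf_iff)

lemma measure_pmf_prob_mono_support:
  assumes "\<And>\<omega>. \<omega> \<in> set_pmf p \<Longrightarrow> \<omega> \<in> A \<Longrightarrow> \<omega> \<in> B"
  shows "measure_pmf.prob p A \<le> measure_pmf.prob p B"
proof -
  have "measure_pmf.prob p A = measure_pmf.prob p (A \<inter> set_pmf p)"
    by (simp add: measure_Int_set_pmf)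
  also have "\<dots> \<le> measure_pmf.prob p B"
    using assms by (intro measure_pmf.finite_measure_mono) auto
  finally show ?thesis .
qed

lemma measure_pmf_prob_bind:
  "measure_pmf.prob (bind_pmf M f) X = (\<integral>a. measure_pmf.prob (f a) X \<partial>M)"
proof -
  have "emeasure (bind_pmf M f) X = (\<integral>\<^sup>+a. emeasure (f a) X \<partial>M)"
    by simp
  also have "\<dots> = (\<integral>\<^sup>+a. ennreal (measure_pmf.prob (f a) X) \<partial>M)"
    by (simp add: measure_pmf.emeasure_eq_measure)
  also have "\<dots> = ennreal (\<integral>a. measure_pmf.prob (f a) X \<partial>M)"
    by (intro nn_integral_eq_integral measure_pmf.integrable_const_bound[where B=1]) auto
  finally show ?thesis
    by (simp add: measure_pmf.emeasure_eq_measure)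
qed

lemma measure_pmf_prob_pair:
  "measure_pmf.prob (pair_pmf A B) E = (\<integral>a. measure_pmf.prob B {b. (a, b) \<in> E} \<partial>A)"
proof -
  have "pair_pmf A B = bind_pmf A (\<lambda>a. map_pmf (Pair a) B)"
    unfolding pair_pmf_def map_pmf_def by simp
  then show ?thesis
    by (simp only: measure_pmf_prob_bind measure_map_pmf) (simp add: vimage_def)
qed

lemma measure_pmf_prob_pair_rect:
  "measure_pmf.prob (pair_pmf A B) {(a, b). P a \<and> Q b}
     = measure_pmf.prob A {a. P a} * measure_pmf.prob B {b. Q b}"
proof -
  have "measure_pmf.prob (pair_pmf A B) {(a, b). P a \<and> Q b}
      = (\<integral>a. indicator {a. P a} a * measure_pmf.prob B {b. Q b} \<partial>A)"
    unfolding measure_pmf_prob_pair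
    by (intro Bochner_Integration.integral_cong) (auto simp: indicator_def)
  then show ?thesis
    by simp
qed

lemma measure_pmf_prob_pair_sections_mult:
  assumes "\<And>a. a \<in> set_pmf A \<Longrightarrow>
    measure_pmf.prob B {b. (a, b) \<in> E} = c * measure_pmf.prob B {b. (a, b) \<in> E'}"
  shows "measure_pmf.prob (pair_pmf A B) E = c * measure_pmf.prob (pair_pmf A B) E'"
proof -
  have "measure_pmf.prob (pair_pmf A B) E = (\<integral>a. c * measure_pmf.prob B {b. (a, b) \<in> E'} \<partial>A)"
    unfolding measure_pmf_prob_pair
    by (intro integral_cong_AE) (auto simp: AE_measure_pmf_iff assms)
  then show ?thesis
    unfolding measure_pmf_prob_pair[of A B E'] by simp
qed

lemma measure_pmf_prob_Pi_pmf_component: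
  assumes "finite I" "i \<in> I"
  shows "measure_pmf.prob (Pi_pmf I d D) {g. P (g i)} = measure_pmf.prob (D i) {y. P y}"
proof -
  have "measure_pmf.prob (Pi_pmf I d D) {g. P (g i)}
      = measure_pmf.prob (map_pmf (\<lambda>g. g i) (Pi_pmf I d D)) {y. P y}"
    by (simp add: vimage_def)
  then show ?thesis
    using assms by (simp add: Pi_pmf_component)
qed

lemma measure_pmf_prob_Pi_pmf_indep_component:
  fixes R :: "'r pmf"
  assumes fin: "finite I" and jI: "j \<in> I"
    and insensitive: "\<And>g y r. r \<in> set_pmf R \<Longrightarrow> Q (g(j := y)) r = Q g r"
    and E: "\<And>g r. (g, r) \<in> E \<longleftrightarrow> P (g j) \<and> Q g r"
    and E': "\<And>g r. (g, r) \<in> E' \<longleftrightarrow> Q g r"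
  shows "measure_pmf.prob (pair_pmf (Pi_pmf I d D) R) E
       = measure_pmf.prob (D j) {y. P y} * measure_pmf.prob (pair_pmf (Pi_pmf I d D) R) E'"
proof -
  define W where "W = pair_pmf (Pi_pmf (I - {j}) d D) R"
  have Pi_split: "Pi_pmf I d D = map_pmf (\<lambda>(y, f). f(j := y)) (pair_pmf (D j) (Pi_pmf (I - {j}) d D))"
    using Pi_pmf_insert[of "I - {j}" j d D] fin jI by (simp add: insert_absorb)
  have reindex: "measure_pmf.prob (pair_pmf (Pi_pmf I d D) R) F
      = measure_pmf.prob (pair_pmf (D j) W) {(y, f, r). (f(j := y), r) \<in> F}" for F
    unfolding Pi_split pair_map_pmf1 pair_pair_pmf W_def
    by (simp add: vimage_def case_prod_unfold apfst_def map_prod_def)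
  have W_support: "set_pmf W \<subseteq> UNIV \<times> set_pmf R"
    unfolding W_def by auto
  have "measure_pmf.prob (pair_pmf (D j) W) {(y, f, r). (f(j := y), r) \<in> E}
     = measure_pmf.prob (pair_pmf (D j) W) {(y, w). P y \<and> case_prod Q w}"
    using W_support by (intro measure_pmf_prob_cong_support) (auto simp: E insensitive)
  moreover have "measure_pmf.prob (pair_pmf (D j) W) {(y, f, r). (f(j := y), r) \<in> E'}
     = measure_pmf.prob (pair_pmf (D j) W) {(y, w). True \<and> case_prod Q w}"
    using W_support by (intro measure_pmf_prob_cong_support) (auto simp: E' insensitive)
  ultimately show ?thesis
    unfolding reindex measure_pmf_prob_pair_rect by simp
qed

section \<open>A single greedy pass\<close>

lemma pass_append:
  "pass want C b S (xs @ ys) st = pass want C b S ys (pass want C b S xs st)"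
  by (induction xs arbitrary: st) (auto split: prod.splits)

lemma pass_cong_want:
  "(\<And>y. y \<in> set js \<Longrightarrow> want y = want' y) \<Longrightarrow> pass want C b S js st = pass want' C b S js st"
  by (induction js arbitrary: st) (auto split: prod.splits)

lemma mem_pass_of_mem:
  "j \<in> A \<Longrightarrow> j \<in> snd (pass want C b S js (u, A))"
  by (induction js arbitrary: u A) auto

lemma pass_subset:
  "snd (pass want C b S js (u, A)) \<subseteq> A \<union> {y \<in> set js. want y}"
proof (induction js arbitrary: u A)
  case (Cons a js)
  have "snd (pass want C b S js (u', insert a A)) \<subseteq> insert a A \<union> {y \<in> set js. want y}" for u'
    by (rule Cons.IH)
  moreover have "snd (pass want C b S js (u, A)) \<subseteq> A \<union> {y \<in> set js. want y}"
    by (rule Cons.IH)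
  ultimately show ?case
    by auto
qed simp

lemma pass_usage:
  assumes "distinct js" "set js \<inter> A = {}"
  shows "fst (pass want C b S js (u, A)) i
           = u i + card {y \<in> snd (pass want C b S js (u, A)) - A. i \<in> S y}"
  using assms
proof (induction js arbitrary: u A)
  case (Cons j js)
  show ?case
  proof (cases "want j \<and> safe C b u j")
    case True
    define u' where "u' = (\<lambda>i. u i + (if i \<in> S j then 1 else 0))"
    define A' where "A' = snd (pass want C b S js (u', insert j A))"
    have IH: "fst (pass want C b S js (u', insert j A)) i
        = u' i + card {y \<in> A' - insert j A. i \<in> S y}"
      using Cons.IH[of "insert j A" u'] Cons.prems by (auto simp: A'_def)
    have "j \<in> A'" "j \<notin> A"
      using Cons.prems unfolding A'_def by (auto intro: mem_pass_of_mem)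
    moreover have "finite (A' - A)"
      using pass_subset[of want C b S js u' "insert j A"]
      by (auto simp: A'_def intro: finite_subset[of _ "insert j (set js)"])
    moreover have "{y \<in> A' - A. i \<in> S y} = (if i \<in> S j then insert j else id)
        {y \<in> A' - insert j A. i \<in> S y}"
      using \<open>j \<in> A'\<close> \<open>j \<notin> A\<close> by auto
    moreover have "finite {y \<in> A' - insert j A. i \<in> S y}"
      using \<open>finite (A' - A)\<close> by (rule finite_subset[rotated]) auto
    ultimately have "card {y \<in> A' - A. i \<in> S y}
        = (if i \<in> S j then 1 else 0) + card {y \<in> A' - insert j A. i \<in> S y}"
      by (simp only:) (simp add: card_insert_if)
    then show ?thesis
      using True IH by (simp add: A'_def u'_def)
  qed (use Cons in auto)
qed simp

lemma mem_pass_indep_own_size: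
  assumes "distinct js" "j \<notin> A"
  shows "j \<in> snd (pass want C b S js (u, A)) \<longleftrightarrow> j \<in> snd (pass want C b (S(j := s)) js (u, A))"
  using assms
proof (induction js arbitrary: u A)
  case (Cons y js)
  show ?case
  proof (cases "y = j")
    case True
    then have "j \<notin> set js"
      using Cons.prems by simp
    then show ?thesis
      using True Cons.prems pass_subset[of want C b _ js] by (auto intro: mem_pass_of_mem)
  qed (use Cons in auto)
qed simp

lemma mem_pass_if_safe_when_reached:
  assumes "j \<in> set \<sigma>" "want j"
    and "safe C b (fst (pass want C b S (takeWhile (\<lambda>y. y \<noteq> j) \<sigma>) (u, A))) j"
  shows "j \<in> snd (pass want C b S \<sigma> (u, A))"
proof -
  obtain rest where "dropWhile (\<lambda>y. y \<noteq> j) \<sigma> = j # rest"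
    using assms(1) by (metis (mono_tags, lifting) dropWhile_eq_Nil_conv hd_dropWhile list.collapse)
  then have \<sigma>: "\<sigma> = takeWhile (\<lambda>y. y \<noteq> j) \<sigma> @ j # rest"
    by (metis takeWhile_dropWhile_id)
  obtain u' A' where st: "pass want C b S (takeWhile (\<lambda>y. y \<noteq> j) \<sigma>) (u, A) = (u', A')"
    by fastforce
  have "j \<in> snd (pass want C b S (j # rest) (u', A'))"
    using assms(2,3) st by (simp add: mem_pass_of_mem)
  then show ?thesis
    by (subst \<sigma>) (simp add: pass_append st)
qed

section \<open>Relative order in a uniform random permutation\<close>

lemma mem_takeWhile_neq_asym:
  "x \<in> set (takeWhile (\<lambda>y. y \<noteq> j) xs) \<Longrightarrow> j \<notin> set (takeWhile (\<lambda>y. y \<noteq> x) xs)"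
proof (induction xs)
  case (Cons a xs)
  show ?case
  proof (cases "a = x \<or> a = j")
    case True
    then show ?thesis
      using Cons.prems by auto
  qed (use Cons in auto)
qed simp

lemma takeWhile_map_transpose:
  "x \<in> set (takeWhile (\<lambda>y. y \<noteq> j) (map (Transposition.transpose x j) \<sigma>))
     \<longleftrightarrow> j \<in> set (takeWhile (\<lambda>y. y \<noteq> x) \<sigma>)"
proof -
  have "takeWhile (\<lambda>y. y \<noteq> j) (map (Transposition.transpose x j) \<sigma>)
      = map (Transposition.transpose x j) (takeWhile (\<lambda>y. y \<noteq> x) \<sigma>)"
    by (induction \<sigma>) (auto simp: transpose_eq_iff)
  moreover have "x = Transposition.transpose x j y \<longleftrightarrow> y = j" for y
    by (auto simp: Transposition.transpose_def)
  ultimately show ?thesis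
    by (auto simp: image_iff)
qed

text \<open>Swapping \<open>x\<close> and \<open>j\<close> is a measure-preserving bijection of the uniform permutation
  exchanging the disjoint events "x precedes j" and "j precedes x".\<close>
lemma prob_precedes_le_half:
  fixes n j x :: nat
  assumes "j < n" "x < n"
  shows "measure_pmf.prob (pmf_of_set (permutations_of_set {..<n}))
           {\<sigma>. x \<in> set (takeWhile (\<lambda>y. y \<noteq> j) \<sigma>)} \<le> 1 / 2"
proof (cases "x = j")
  case True
  then have "{\<sigma>. x \<in> set (takeWhile (\<lambda>y. y \<noteq> j) \<sigma>)} = {}"
    by (auto dest: set_takeWhileD)
  then show ?thesis
    by simp
next
  case False
  define P where "P = permutations_of_set {..<n}"
  define \<tau> where "\<tau> = Transposition.transpose x j"
  define B1 where "B1 = {\<sigma>. x \<in> set (takeWhile (\<lambda>y. y \<noteq> j) \<sigma>)}"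
  define B2 where "B2 = {\<sigma>. j \<in> set (takeWhile (\<lambda>y. y \<noteq> x) \<sigma>)}"
  have "finite P" "P \<noteq> {}"
    unfolding P_def by auto
  have "inj_on (map \<tau>) P"
    unfolding \<tau>_def by (intro inj_on_subset[OF inj_mapI] inj_transpose) auto
  have perm: "map \<tau> \<sigma> \<in> P" if "\<sigma> \<in> P" for \<sigma>
    using that assms unfolding P_def \<tau>_def
    by (intro permutations_of_setI)
      (auto simp: distinct_map Transposition.transpose_def dest: permutations_of_setD)
  have "map \<tau> ` P = P"
  proof (intro equalityI subsetI)
    fix \<sigma> assume "\<sigma> \<in> P"
    moreover have "\<sigma> = map \<tau> (map \<tau> \<sigma>)"
      by (simp add: \<tau>_def)
    ultimately show "\<sigma> \<in> map \<tau> ` P"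
      using perm by blast
  qed (use perm in auto)
  then have "map_pmf (map \<tau>) (pmf_of_set P) = pmf_of_set P"
    using map_pmf_of_set_inj[OF \<open>inj_on (map \<tau>) P\<close> \<open>P \<noteq> {}\<close> \<open>finite P\<close>] by simp
  moreover have "map \<tau> -` B1 = B2"
    unfolding B1_def B2_def \<tau>_def by (auto simp: takeWhile_map_transpose)
  ultimately have "measure_pmf.prob (pmf_of_set P) B1 = measure_pmf.prob (pmf_of_set P) B2"
    by (metis measure_map_pmf)
  moreover have "B1 \<inter> B2 = {}"
    unfolding B1_def B2_def by (auto dest: mem_takeWhile_neq_asym)
  then have "measure_pmf.prob (pmf_of_set P) B1 + measure_pmf.prob (pmf_of_set P) B2 \<le> 1"
    by (simp add: measure_pmf.finite_measure_Union[symmetric])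
  ultimately show ?thesis
    unfolding B1_def P_def by simp
qed

section \<open>The probability space of a run of SKSP\<close>

lemma prob_bernoulli_pmf_True:
  assumes "0 \<le> p" "p \<le> 1"
  shows "measure_pmf.prob (bernoulli_pmf p) {b. b} = p"
proof -
  have "{b. b} = {True}"
    by auto
  then show ?thesis
    using assms by (simp add: measure_pmf_single)
qed

type_synonym sksp_sample =
  "(nat \<Rightarrow> nat set) \<times> (nat \<Rightarrow> bool) \<times> (nat \<Rightarrow> bool) \<times> nat list \<times> (nat \<Rightarrow> bool) \<times> nat list"

locale sksp_run =
  fixes n k :: nat and C :: "nat \<Rightarrow> nat set" and b :: "nat \<Rightarrow> nat"
    and D :: "nat \<Rightarrow> nat set pmf" and x gam :: "nat \<Rightarrow> real" and \<alpha>1 \<beta>1 \<alpha>2 :: real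
  assumes k_pos: "0 < k"
    and x_nonneg: "\<And>y. y < n \<Longrightarrow> 0 \<le> x y"
    and \<alpha>1_nonneg: "0 \<le> \<alpha>1" and \<beta>1_nonneg: "0 \<le> \<beta>1" and \<alpha>2_nonneg: "0 \<le> \<alpha>2"
    and Y1_wd: "\<And>y. y < n \<Longrightarrow> \<alpha>1 * x y / real k \<le> 1"
    and Y2_wd: "\<And>y. y < n \<Longrightarrow> \<alpha>2 * x y / real k \<le> 1"
    and attenuation: "\<And>y. y < n \<Longrightarrow>
      measure_pmf.prob (sksp n k C b D x \<alpha>1 \<alpha>2 gam) {r. y \<in> fst r} = \<beta>1 * x y / real k"
begin

definition coins :: "(nat \<Rightarrow> real) \<Rightarrow> (nat \<Rightarrow> bool) pmf" where
  "coins p = Pi_pmf {..<n} False (\<lambda>y. bernoulli_pmf (p y))"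

definition uniform_perm :: "nat list pmf" where
  "uniform_perm = pmf_of_set (permutations_of_set {..<n})"

definition \<Omega> :: "sksp_sample pmf" where
  "\<Omega> = pair_pmf (Pi_pmf {..<n} {} D)
         (pair_pmf (coins (\<lambda>y. \<alpha>1 * x y / real k))
         (pair_pmf (coins gam)
         (pair_pmf uniform_perm
         (pair_pmf (coins (\<lambda>y. \<alpha>2 * x y / real k)) uniform_perm))))"

definition first_state ::
    "(nat \<Rightarrow> nat set) \<Rightarrow> (nat \<Rightarrow> bool) \<Rightarrow> (nat \<Rightarrow> bool) \<Rightarrow> nat list \<Rightarrow> (nat \<Rightarrow> nat) \<times> nat set" where
  "first_state S Y1 Z \<sigma>1 = pass (\<lambda>y. Y1 y \<and> Z y) C b S \<sigma>1 (\<lambda>_. 0, {})"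

definition second_state :: "(nat \<Rightarrow> nat set) \<Rightarrow> (nat \<Rightarrow> bool) \<Rightarrow> (nat \<Rightarrow> bool) \<Rightarrow> nat list
    \<Rightarrow> (nat \<Rightarrow> bool) \<Rightarrow> nat list \<Rightarrow> (nat \<Rightarrow> nat) \<times> nat set" where
  "second_state S Y1 Z \<sigma>1 Y2 js = pass (\<lambda>y. \<not> Y1 y \<and> Y2 y) C b S js (fst (first_state S Y1 Z \<sigma>1), {})"

fun outcome :: "sksp_sample \<Rightarrow> nat set \<times> nat set" where
  "outcome (S, Y1, Z, \<sigma>1, Y2, \<sigma>2) = (snd (first_state S Y1 Z \<sigma>1), snd (second_state S Y1 Z \<sigma>1 Y2 \<sigma>2))"

fun load_at :: "nat \<Rightarrow> sksp_sample \<Rightarrow> nat \<Rightarrow> nat" where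
  "load_at j (S, Y1, Z, \<sigma>1, Y2, \<sigma>2) = fst (second_state S Y1 Z \<sigma>1 Y2 (takeWhile (\<lambda>y. y \<noteq> j) \<sigma>2))"

definition reached_safe :: "nat \<Rightarrow> sksp_sample set" where
  "reached_safe j = {(S, Y1, Z, \<sigma>1, Y2, \<sigma>2). \<not> Y1 j \<and> (\<forall>i\<in>C j. load_at j (S, Y1, Z, \<sigma>1, Y2, \<sigma>2) i < b i)}"

lemma sksp_eq_map_outcome: "sksp n k C b D x \<alpha>1 \<alpha>2 gam = map_pmf outcome \<Omega>"
  unfolding sksp_def \<Omega>_def coins_def uniform_perm_def pair_pmf_def
  by (simp add: map_bind_pmf bind_assoc_pmf bind_return_pmf Let_def first_state_def second_state_def)

lemma set_pmf_\<Omega>_permutations: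
  assumes "(S, Y1, Z, \<sigma>1, Y2, \<sigma>2) \<in> set_pmf \<Omega>"
  shows "distinct \<sigma>1" "distinct \<sigma>2" "set \<sigma>1 = {..<n}" "set \<sigma>2 = {..<n}"
  using assms by (auto simp: \<Omega>_def uniform_perm_def dest: permutations_of_setD)

lemma prob_coins_component:
  assumes "y < n" "0 \<le> p y" "p y \<le> 1"
  shows "measure_pmf.prob (coins p) {g. g y} = p y"
  using assms unfolding coins_def
  by (simp add: measure_pmf_prob_Pi_pmf_component[where P = "\<lambda>b. b"] prob_bernoulli_pmf_True)

lemma coin_prob_bounds:
  assumes "y < n"
  shows "0 \<le> \<alpha>1 * x y / real k" "0 \<le> \<alpha>2 * x y / real k"
  using assms x_nonneg \<alpha>1_nonneg \<alpha>2_nonneg by simp_all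

text \<open>Conditioning on the first-chance randomness \<open>(S, Y1, Z, \<sigma>1)\<close>.\<close>
lemma prob_\<Omega>_by_second_chance_sections:
  assumes "\<And>S Y1 Z \<sigma>1.
      measure_pmf.prob (pair_pmf (coins (\<lambda>y. \<alpha>2 * x y / real k)) uniform_perm) {w. (S, Y1, Z, \<sigma>1, w) \<in> E}
    = c * measure_pmf.prob (pair_pmf (coins (\<lambda>y. \<alpha>2 * x y / real k)) uniform_perm) {w. (S, Y1, Z, \<sigma>1, w) \<in> E'}"
  shows "measure_pmf.prob \<Omega> E = c * measure_pmf.prob \<Omega> E'"
  unfolding \<Omega>_def
  by (rule measure_pmf_prob_pair_sections_mult, rule measure_pmf_prob_pair_sections_mult,
      rule measure_pmf_prob_pair_sections_mult, rule measure_pmf_prob_pair_sections_mult)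
     (simp add: assms)

lemma prob_first_coin:
  assumes "j < n"
  shows "measure_pmf.prob \<Omega> {(S, Y1, Z, \<sigma>1, Y2, \<sigma>2). Y1 j} = \<alpha>1 * x j / real k"
proof -
  have "map_pmf (fst \<circ> snd) \<Omega> = coins (\<lambda>y. \<alpha>1 * x y / real k)"
    unfolding \<Omega>_def map_pmf_compose by (simp add: map_fst_pair_pmf map_snd_pair_pmf)
  then have "measure_pmf.prob \<Omega> ((fst \<circ> snd) -` {g. g j})
      = measure_pmf.prob (coins (\<lambda>y. \<alpha>1 * x y / real k)) {g. g j}"
    by (metis measure_map_pmf)
  also have "\<dots> = \<alpha>1 * x j / real k"
    using assms Y1_wd coin_prob_bounds by (intro prob_coins_component) auto
  finally show ?thesis
    by (simp add: vimage_def case_prod_unfold)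
qed

lemma mem_second_outcome_if_reached_safe:
  assumes "j < n" "(S, Y1, Z, \<sigma>1, Y2, \<sigma>2) \<in> set_pmf \<Omega>"
    and "(S, Y1, Z, \<sigma>1, Y2, \<sigma>2) \<in> reached_safe j" "Y2 j"
  shows "j \<in> snd (outcome (S, Y1, Z, \<sigma>1, Y2, \<sigma>2))"
proof -
  have "j \<in> set \<sigma>2"
    using set_pmf_\<Omega>_permutations(4)[OF assms(2)] \<open>j < n\<close> by simp
  then show ?thesis
    using assms(3,4) unfolding outcome.simps second_state_def
    by (auto simp: reached_safe_def safe_def second_state_def intro: mem_pass_if_safe_when_reached)
qed

lemma load_at_indep_second_coin:
  "load_at j (S, Y1, Z, \<sigma>1, Y2(j := c), \<sigma>2) = load_at j (S, Y1, Z, \<sigma>1, Y2, \<sigma>2)"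
  unfolding load_at.simps second_state_def
  by (rule arg_cong[where f = fst], rule pass_cong_want) (auto dest: set_takeWhileD)

lemma prob_second_coin_and_reached_safe:
  assumes "j < n"
  shows "measure_pmf.prob \<Omega> {(S, Y1, Z, \<sigma>1, Y2, \<sigma>2). Y2 j \<and> (S, Y1, Z, \<sigma>1, Y2, \<sigma>2) \<in> reached_safe j}
           = \<alpha>2 * x j / real k * measure_pmf.prob \<Omega> (reached_safe j)"
proof -
  have "measure_pmf.prob (bernoulli_pmf (\<alpha>2 * x j / real k)) {b. b} = \<alpha>2 * x j / real k"
    using assms Y2_wd coin_prob_bounds by (intro prob_bernoulli_pmf_True) auto
  moreover have "measure_pmf.prob (pair_pmf (coins (\<lambda>y. \<alpha>2 * x y / real k)) uniform_perm)
      {w. (S, Y1, Z, \<sigma>1, w) \<in> {(S, Y1, Z, \<sigma>1, Y2, \<sigma>2). Y2 j \<and> (S, Y1, Z, \<sigma>1, Y2, \<sigma>2) \<in> reached_safe j}}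
    = measure_pmf.prob (bernoulli_pmf (\<alpha>2 * x j / real k)) {b. b}
      * measure_pmf.prob (pair_pmf (coins (\<lambda>y. \<alpha>2 * x y / real k)) uniform_perm)
          {w. (S, Y1, Z, \<sigma>1, w) \<in> reached_safe j}" for S Y1 Z \<sigma>1
    unfolding coins_def
    by (rule measure_pmf_prob_Pi_pmf_indep_component[where P = "\<lambda>b. b"
          and Q = "\<lambda>Y2 \<sigma>2. (S, Y1, Z, \<sigma>1, Y2, \<sigma>2) \<in> reached_safe j"])
       (use assms in \<open>auto simp: reached_safe_def load_at_indep_second_coin simp del: load_at.simps\<close>)
  ultimately show ?thesis
    by (intro prob_\<Omega>_by_second_chance_sections) simp
qed

lemma prob_added_second_ge:
  assumes "j < n"
  shows "\<alpha>2 * x j / real k * measure_pmf.prob \<Omega> (reached_safe j)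
           \<le> measure_pmf.prob (sksp n k C b D x \<alpha>1 \<alpha>2 gam) {r. j \<in> snd r}"
proof -
  have "\<alpha>2 * x j / real k * measure_pmf.prob \<Omega> (reached_safe j)
      = measure_pmf.prob \<Omega> {(S, Y1, Z, \<sigma>1, Y2, \<sigma>2). Y2 j \<and> (S, Y1, Z, \<sigma>1, Y2, \<sigma>2) \<in> reached_safe j}"
    using prob_second_coin_and_reached_safe[OF assms] by simp
  also have "\<dots> \<le> measure_pmf.prob \<Omega> (outcome -` {r. j \<in> snd r})"
    using mem_second_outcome_if_reached_safe[OF assms]
    by (intro measure_pmf_prob_mono_support) (clarsimp simp del: outcome.simps)
  finally show ?thesis
    by (simp add: sksp_eq_map_outcome)
qed

lemma prob_\<Omega>_const_second_chance_sections:
  assumes "\<And>S Y1 Z \<sigma>1.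
    measure_pmf.prob (pair_pmf (coins (\<lambda>y. \<alpha>2 * x y / real k)) uniform_perm) {w. (S, Y1, Z, \<sigma>1, w) \<in> E} = c"
  shows "measure_pmf.prob \<Omega> E = c"
  using prob_\<Omega>_by_second_chance_sections[of E c UNIV] assms by simp

lemma prob_added_first_and_uses:
  assumes "y < n"
  shows "measure_pmf.prob \<Omega> {(S, Y1, Z, \<sigma>1, Y2, \<sigma>2). y \<in> snd (first_state S Y1 Z \<sigma>1) \<and> i \<in> S y}
           = mean_size D i y * (\<beta>1 * x y / real k)"
proof -
  define F :: "sksp_sample set" where
    "F = {(S, Y1, Z, \<sigma>1, Y2, \<sigma>2). y \<in> snd (first_state S Y1 Z \<sigma>1)}"
  have "measure_pmf.prob \<Omega> {(S, Y1, Z, \<sigma>1, Y2, \<sigma>2). y \<in> snd (first_state S Y1 Z \<sigma>1) \<and> i \<in> S y}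
      = measure_pmf.prob (D y) {A. i \<in> A} * measure_pmf.prob \<Omega> F"
    unfolding \<Omega>_def
  proof (rule measure_pmf_prob_Pi_pmf_indep_component[where P = "\<lambda>A. i \<in> A" and Q = "\<lambda>S r. (S, r) \<in> F"])
    fix S s and r :: "(nat \<Rightarrow> bool) \<times> (nat \<Rightarrow> bool) \<times> nat list \<times> (nat \<Rightarrow> bool) \<times> nat list"
    assume "r \<in> set_pmf (pair_pmf (coins (\<lambda>y. \<alpha>1 * x y / real k))
      (pair_pmf (coins gam) (pair_pmf uniform_perm (pair_pmf (coins (\<lambda>y. \<alpha>2 * x y / real k)) uniform_perm))))"
    then obtain Y1 Z \<sigma>1 Y2 \<sigma>2 where "r = (Y1, Z, \<sigma>1, Y2, \<sigma>2)" "distinct \<sigma>1"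
      by (cases r) (auto simp: uniform_perm_def dest: permutations_of_setD)
    then show "((S(y := s), r) \<in> F) = ((S, r) \<in> F)"
      using mem_pass_indep_own_size[of \<sigma>1 y "{}"] by (simp add: F_def first_state_def)
  qed (auto simp: assms F_def)
  moreover have "measure_pmf.prob \<Omega> F = \<beta>1 * x y / real k"
  proof -
    have "F = outcome -` {r. y \<in> fst r}"
      by (auto simp: F_def)
    then show ?thesis
      using attenuation[OF assms] by (simp add: sksp_eq_map_outcome)
  qed
  ultimately show ?thesis
    by (simp add: mean_size_def)
qed

lemma prob_precedes_and_uses_le:
  assumes "j < n" "y < n"
  shows "measure_pmf.prob \<Omega> {(S, Y1, Z, \<sigma>1, Y2, \<sigma>2). y \<in> set (takeWhile (\<lambda>z. z \<noteq> j) \<sigma>2) \<and> Y2 y \<and> i \<in> S y}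
           \<le> mean_size D i y * (\<alpha>2 * x y / real k) / 2"
proof -
  define F :: "sksp_sample set" where
    "F = {(S, Y1, Z, \<sigma>1, Y2, \<sigma>2). Y2 y \<and> y \<in> set (takeWhile (\<lambda>z. z \<noteq> j) \<sigma>2)}"
  have factor_size: "measure_pmf.prob \<Omega>
      {(S, Y1, Z, \<sigma>1, Y2, \<sigma>2). y \<in> set (takeWhile (\<lambda>z. z \<noteq> j) \<sigma>2) \<and> Y2 y \<and> i \<in> S y}
      = mean_size D i y * measure_pmf.prob \<Omega> F"
    unfolding \<Omega>_def mean_size_def
    by (rule measure_pmf_prob_Pi_pmf_indep_component[where P = "\<lambda>A. i \<in> A" and Q = "\<lambda>S r. (S, r) \<in> F"])
       (auto simp: assms F_def)
  have factor_coin: "measure_pmf.prob \<Omega> F = \<alpha>2 * x y / real k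
      * measure_pmf.prob uniform_perm {\<sigma>. y \<in> set (takeWhile (\<lambda>z. z \<noteq> j) \<sigma>)}"
  proof (rule prob_\<Omega>_const_second_chance_sections)
    fix S Y1 Z \<sigma>1
    have "{w. (S, Y1, Z, \<sigma>1, w) \<in> F} = {(g, \<sigma>). g y \<and> y \<in> set (takeWhile (\<lambda>z. z \<noteq> j) \<sigma>)}"
      by (auto simp: F_def)
    then show "measure_pmf.prob (pair_pmf (coins (\<lambda>y. \<alpha>2 * x y / real k)) uniform_perm)
        {w. (S, Y1, Z, \<sigma>1, w) \<in> F}
      = \<alpha>2 * x y / real k * measure_pmf.prob uniform_perm {\<sigma>. y \<in> set (takeWhile (\<lambda>z. z \<noteq> j) \<sigma>)}"
      using assms Y2_wd coin_prob_bounds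
      by (simp only: measure_pmf_prob_pair_rect) (simp add: prob_coins_component)
  qed
  have "0 \<le> mean_size D i y * (\<alpha>2 * x y / real k)"
    using assms coin_prob_bounds(2) unfolding mean_size_def by (intro mult_nonneg_nonneg) auto
  moreover have "measure_pmf.prob uniform_perm {\<sigma>. y \<in> set (takeWhile (\<lambda>z. z \<noteq> j) \<sigma>)} \<le> 1 / 2"
    unfolding uniform_perm_def using assms by (rule prob_precedes_le_half)
  ultimately have "mean_size D i y * (\<alpha>2 * x y / real k)
      * measure_pmf.prob uniform_perm {\<sigma>. y \<in> set (takeWhile (\<lambda>z. z \<noteq> j) \<sigma>)}
      \<le> mean_size D i y * (\<alpha>2 * x y / real k) * (1 / 2)"
    by (intro mult_left_mono)
  then show ?thesis
    unfolding factor_size factor_coin by (simp add: mult.assoc)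
qed

lemma load_at_le_counts:
  assumes "(S, Y1, Z, \<sigma>1, Y2, \<sigma>2) \<in> set_pmf \<Omega>"
  shows "load_at j (S, Y1, Z, \<sigma>1, Y2, \<sigma>2) i
     \<le> card {y \<in> {..<n}. y \<in> snd (first_state S Y1 Z \<sigma>1) \<and> i \<in> S y}
       + card {y \<in> {..<n}. y \<in> set (takeWhile (\<lambda>z. z \<noteq> j) \<sigma>2) \<and> Y2 y \<and> i \<in> S y}"
proof -
  note perms = set_pmf_\<Omega>_permutations[OF assms]
  define pre where "pre = takeWhile (\<lambda>z. z \<noteq> j) \<sigma>2"
  have "distinct pre" "set pre \<subseteq> {..<n}"
    using perms unfolding pre_def by (auto dest: set_takeWhileD)
  have "fst (first_state S Y1 Z \<sigma>1) i = card {y \<in> snd (first_state S Y1 Z \<sigma>1). i \<in> S y}"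
    using pass_usage[OF perms(1), of "{}"] by (simp add: first_state_def)
  also have "{y \<in> snd (first_state S Y1 Z \<sigma>1). i \<in> S y}
      = {y \<in> {..<n}. y \<in> snd (first_state S Y1 Z \<sigma>1) \<and> i \<in> S y}"
    using pass_subset[of _ C b S \<sigma>1 _ "{}"] perms(3) by (auto simp: first_state_def)
  finally have first: "fst (first_state S Y1 Z \<sigma>1) i
      = card {y \<in> {..<n}. y \<in> snd (first_state S Y1 Z \<sigma>1) \<and> i \<in> S y}" .
  have "load_at j (S, Y1, Z, \<sigma>1, Y2, \<sigma>2) i
      = fst (first_state S Y1 Z \<sigma>1) i + card {y \<in> snd (second_state S Y1 Z \<sigma>1 Y2 pre). i \<in> S y}"
    using pass_usage[OF \<open>distinct pre\<close>, of "{}"] by (simp add: second_state_def pre_def)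
  moreover have "card {y \<in> snd (second_state S Y1 Z \<sigma>1 Y2 pre). i \<in> S y}
      \<le> card {y \<in> {..<n}. y \<in> set pre \<and> Y2 y \<and> i \<in> S y}"
    using pass_subset[of _ C b S pre _ "{}"] \<open>set pre \<subseteq> {..<n}\<close>
    by (intro card_mono) (auto simp: second_state_def)
  ultimately show ?thesis
    unfolding first pre_def by simp
qed

lemma prob_resource_exhausted_le:
  assumes "j < n" "1 \<le> b i" and lp: "(\<Sum>y<n. mean_size D i y * x y) \<le> real (b i)"
  shows "measure_pmf.prob \<Omega> {\<omega>. b i \<le> load_at j \<omega> i} \<le> (\<beta>1 + \<alpha>2 / 2) / real k"
proof -
  define E1 :: "nat \<Rightarrow> sksp_sample set" where
    "E1 y = {(S, Y1, Z, \<sigma>1, Y2, \<sigma>2). y \<in> snd (first_state S Y1 Z \<sigma>1) \<and> i \<in> S y}" for y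
  define E2 :: "nat \<Rightarrow> sksp_sample set" where
    "E2 y = {(S, Y1, Z, \<sigma>1, Y2, \<sigma>2). y \<in> set (takeWhile (\<lambda>z. z \<noteq> j) \<sigma>2) \<and> Y2 y \<and> i \<in> S y}" for y
  define V where "V \<omega> = (\<Sum>y<n. indicator (E1 y) \<omega> + indicator (E2 y) \<omega> :: real)" for \<omega>
  have V_nonneg: "0 \<le> V \<omega>" for \<omega>
    unfolding V_def by (intro sum_nonneg) auto
  have "integrable \<Omega> V"
    unfolding V_def by (auto simp: measure_pmf.emeasure_eq_measure)
  have "measure_pmf.expectation \<Omega> V = (\<Sum>y<n. measure_pmf.prob \<Omega> (E1 y) + measure_pmf.prob \<Omega> (E2 y))"
    unfolding V_def by (subst Bochner_Integration.integral_sum) (auto simp: measure_pmf.emeasure_eq_measure)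
  also have "\<dots> \<le> (\<Sum>y<n. mean_size D i y * x y * ((\<beta>1 + \<alpha>2 / 2) / real k))"
  proof (rule sum_mono)
    fix y assume "y \<in> {..<n}"
    then show "measure_pmf.prob \<Omega> (E1 y) + measure_pmf.prob \<Omega> (E2 y)
        \<le> mean_size D i y * x y * ((\<beta>1 + \<alpha>2 / 2) / real k)"
    proof -
      have "mean_size D i y * (\<beta>1 * x y / real k) + mean_size D i y * (\<alpha>2 * x y / real k) / 2
          = mean_size D i y * x y * ((\<beta>1 + \<alpha>2 / 2) / real k)"
        using k_pos by (simp add: field_simps)
      then show ?thesis
        using prob_added_first_and_uses[of y i] prob_precedes_and_uses_le[OF \<open>j < n\<close>, of y i] \<open>y \<in> {..<n}\<close>
        unfolding E1_def E2_def by simp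
    qed
  qed
  also have "\<dots> = (\<Sum>y<n. mean_size D i y * x y) * ((\<beta>1 + \<alpha>2 / 2) / real k)"
    by (rule sum_distrib_right[symmetric])
  also have "\<dots> \<le> real (b i) * ((\<beta>1 + \<alpha>2 / 2) / real k)"
    using lp \<beta>1_nonneg \<alpha>2_nonneg by (intro mult_right_mono) auto
  finally have expectation_le: "measure_pmf.expectation \<Omega> V \<le> real (b i) * ((\<beta>1 + \<alpha>2 / 2) / real k)" .
  have "measure_pmf.prob \<Omega> {\<omega>. b i \<le> load_at j \<omega> i} \<le> measure_pmf.prob \<Omega> {\<omega>. real (b i) \<le> V \<omega>}"
  proof (rule measure_pmf_prob_mono_support, clarify)
    fix S Y1 Z \<sigma>1 Y2 \<sigma>2
    assume "(S, Y1, Z, \<sigma>1, Y2, \<sigma>2) \<in> set_pmf \<Omega>" "b i \<le> load_at j (S, Y1, Z, \<sigma>1, Y2, \<sigma>2) i"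
    moreover have "V (S, Y1, Z, \<sigma>1, Y2, \<sigma>2)
      = real (card {y \<in> {..<n}. y \<in> snd (first_state S Y1 Z \<sigma>1) \<and> i \<in> S y})
        + real (card {y \<in> {..<n}. y \<in> set (takeWhile (\<lambda>z. z \<noteq> j) \<sigma>2) \<and> Y2 y \<and> i \<in> S y})"
      unfolding V_def sum.distrib by (simp add: indicator_def E1_def E2_def Int_def)
    ultimately show "real (b i) \<le> V (S, Y1, Z, \<sigma>1, Y2, \<sigma>2)"
      using load_at_le_counts[of S Y1 Z \<sigma>1 Y2 \<sigma>2 j i] by linarith
  qed
  also have "\<dots> \<le> measure_pmf.expectation \<Omega> V / real (b i)"
    using integral_Markov_inequality_measure[OF \<open>integrable \<Omega> V\<close>, of UNIV "real (b i)"] assms V_nonneg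
    by simp
  also have "\<dots> \<le> (\<beta>1 + \<alpha>2 / 2) / real k"
    using expectation_le assms by (simp add: divide_le_eq mult.commute)
  finally show ?thesis .
qed

lemma prob_reached_safe_ge:
  assumes "j < n" "finite (C j)" "card (C j) \<le> k"
    and lp: "\<And>i. i \<in> C j \<Longrightarrow> 1 \<le> b i \<and> (\<Sum>y<n. mean_size D i y * x y) \<le> real (b i)"
  shows "1 - \<alpha>1 * x j / real k - (\<beta>1 + \<alpha>2 / 2) \<le> measure_pmf.prob \<Omega> (reached_safe j)"
proof -
  let ?q = "\<beta>1 + \<alpha>2 / 2"
  have "UNIV - reached_safe j
      \<subseteq> {(S, Y1, Z, \<sigma>1, Y2, \<sigma>2). Y1 j} \<union> (\<Union>i\<in>C j. {\<omega>. b i \<le> load_at j \<omega> i})"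
    by (auto simp: reached_safe_def not_less simp del: load_at.simps)
  then have "measure_pmf.prob \<Omega> (UNIV - reached_safe j)
      \<le> measure_pmf.prob \<Omega> ({(S, Y1, Z, \<sigma>1, Y2, \<sigma>2). Y1 j} \<union> (\<Union>i\<in>C j. {\<omega>. b i \<le> load_at j \<omega> i}))"
    by (rule measure_pmf.finite_measure_mono) simp
  also have "\<dots> \<le> measure_pmf.prob \<Omega> {(S, Y1, Z, \<sigma>1, Y2, \<sigma>2). Y1 j}
      + measure_pmf.prob \<Omega> (\<Union>i\<in>C j. {\<omega>. b i \<le> load_at j \<omega> i})"
    by (rule measure_subadditive) (simp_all add: measure_pmf.emeasure_eq_measure)
  also have "\<dots> \<le> \<alpha>1 * x j / real k + (\<Sum>i\<in>C j. measure_pmf.prob \<Omega> {\<omega>. b i \<le> load_at j \<omega> i})"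
    using prob_first_coin[OF \<open>j < n\<close>] \<open>finite (C j)\<close>
    by (simp add: measure_pmf.finite_measure_subadditive_finite)
  also have "\<dots> \<le> \<alpha>1 * x j / real k + (\<Sum>i\<in>C j. ?q / real k)"
    using prob_resource_exhausted_le[OF \<open>j < n\<close>] lp by (intro add_left_mono sum_mono) auto
  also have "\<dots> \<le> \<alpha>1 * x j / real k + ?q"
  proof -
    have "real (card (C j)) * ?q \<le> real k * ?q"
      using \<open>card (C j) \<le> k\<close> \<beta>1_nonneg \<alpha>2_nonneg by (intro mult_right_mono) auto
    then show ?thesis
      using k_pos by (simp add: divide_le_eq mult.commute)
  qed
  finally show ?thesis
    using measure_pmf.prob_compl[of "reached_safe j" \<Omega>] by simp
qed

end

theorem lemma4:
  fixes n m k :: nat and C :: "nat \<Rightarrow> nat set" and D :: "nat \<Rightarrow> nat set pmf"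
    and b :: "nat \<Rightarrow> nat" and w x gam :: "nat \<Rightarrow> real" and \<alpha>1 \<beta>1 \<alpha>2 :: real
  assumes k_pos: "k \<ge> 1"
    and C_res: "\<forall>j<n. C j \<subseteq> {..<m} \<and> card (C j) \<le> k"
    and D_supp: "\<forall>j<n. set_pmf (D j) \<subseteq> Pow (C j)"
    and b_pos: "\<forall>i<m. b i \<ge> 1"
    and w_nonneg: "\<forall>j<n. w j \<ge> 0"
    and x_opt: "lp_optimal n m D b w x"
    and \<alpha>1_nonneg: "\<alpha>1 \<ge> 0" and \<alpha>2_nonneg: "\<alpha>2 \<ge> 0"
    and \<beta>1_bounds: "0 \<le> \<beta>1" "\<beta>1 \<le> \<alpha>1 * (1 - \<alpha>1 / 2)"
    and Y1_wd: "\<forall>j<n. \<alpha>1 * x j / real k \<le> 1"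
    and Y2_wd: "\<forall>j<n. \<alpha>2 * x j / real k \<le> 1"
    and gam_range: "\<forall>j<n. 0 \<le> gam j \<and> gam j \<le> 1"
    and attenuation: "\<forall>j<n. measure_pmf.prob (sksp n k C b D x \<alpha>1 \<alpha>2 gam) {r. j \<in> fst r}
                              = \<beta>1 * x j / real k"
    and j: "j < n"
  shows "measure_pmf.prob (sksp n k C b D x \<alpha>1 \<alpha>2 gam) {r. j \<in> snd r}
           \<ge> x j / real k * \<alpha>2 * (1 - \<alpha>1 * x j / real k - \<beta>1 - \<alpha>2 / 2)"
proof -
  have feasible: "lp_feasible n m D b x"
    using x_opt by (simp add: lp_optimal_def)
  interpret sksp_run n k C b D x gam \<alpha>1 \<beta>1 \<alpha>2
    using k_pos feasible \<alpha>1_nonneg \<alpha>2_nonneg \<beta>1_bounds Y1_wd Y2_wd attenuation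
    by unfold_locales (auto simp: lp_feasible_def)
  have "finite (C j)" "card (C j) \<le> k" "C j \<subseteq> {..<m}"
    using C_res j by (auto intro: finite_subset)
  then have "1 - \<alpha>1 * x j / real k - (\<beta>1 + \<alpha>2 / 2) \<le> measure_pmf.prob \<Omega> (reached_safe j)"
    using b_pos feasible by (intro prob_reached_safe_ge[OF j]) (auto simp: lp_feasible_def)
  then have "\<alpha>2 * x j / real k * (1 - \<alpha>1 * x j / real k - (\<beta>1 + \<alpha>2 / 2))
      \<le> \<alpha>2 * x j / real k * measure_pmf.prob \<Omega> (reached_safe j)"
    using coin_prob_bounds(2)[OF j] by (rule mult_left_mono)
  then have "x j / real k * \<alpha>2 * (1 - \<alpha>1 * x j / real k - \<beta>1 - \<alpha>2 / 2)
      \<le> \<alpha>2 * x j / real k * measure_pmf.prob \<Omega> (reached_safe j)"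
    by (simp add: algebra_simps)
  also have "\<dots> \<le> measure_pmf.prob (sksp n k C b D x \<alpha>1 \<alpha>2 gam) {r. j \<in> snd r}"
    by (rule prob_added_second_ge[OF j])
  finally show ?thesis .
qed

end
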